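(* Let $A$ be a real matrix with $m$ rows, let $B$ be a real matrix with $m$ nonzero columns, and let $OPT$ be a set of $k$ columns of $B$ maximizing $f_A$ among all $k$-sets of columns of $B$, with $\sigma_{\min}(OPT) > 0$. Then for any partition $(I, J)$ of $OPT$, $$f_A(I) + f_A(J) \ge \frac{f_A(OPT)}{2\,\kappa(OPT)}.$$
   Context: For a finite set $V$ of vectors in $\mathbb{R}^m$, $\Pi_V$ is the orthogonal projector onto $\mathrm{span}(V)$ and, for a matrix $M$ with $m$ rows, $f_M(V) = \|\Pi_V M\|_F^2$. For a finite set $V$ of nonzero vectors, $\sigma_{\min}(V)$ and $\sigma_{\max}(V)$ are the smallest and largest squared singular values of the matrix whose columns are the vectors of $V$ rescaled to unit length, and $\kappa(V) = \sigma_{\max}(V)/\sigma_{\min}(V)$. *)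

theory Defs
  imports "HOL-Analysis.Analysis"
begin

definition proj_span :: "'a::euclidean_space set \<Rightarrow> 'a \<Rightarrow> 'a" where
  "proj_span V x = (THE p. p \<in> span V \<and> (\<forall>w\<in>span V. (x - p) \<bullet> w = 0))"

definition proj_mat :: "(real^'m) set \<Rightarrow> real^'m^'m" where
  "proj_mat V = matrix (proj_span V)"

definition frob2 :: "real^'n^'m \<Rightarrow> real" where
  "frob2 M = (\<Sum>i\<in>UNIV. \<Sum>j\<in>UNIV. (M $ i $ j)^2)"

definition fM :: "real^'n^'m \<Rightarrow> (real^'m) set \<Rightarrow> real" where
  "fM M V = frob2 (proj_mat V ** M)"

definition cols :: "real^'n^'m \<Rightarrow> (real^'m) set" where
  "cols B = {column j B | j. True}"

text \<open>Squared singular values of the matrix N whose columns are the vectors of V rescaled to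
  unit length (columns indexed by V): the eigenvalues of the Gram matrix N^T N.\<close>
definition sq_sing_vals :: "'a::euclidean_space set \<Rightarrow> real set" where
  "sq_sing_vals V = {lam. \<exists>x::'a \<Rightarrow> real. (\<exists>u\<in>V. x u \<noteq> 0) \<and>
     (\<forall>u\<in>V. (\<Sum>w\<in>V. ((inverse (norm u) *\<^sub>R u) \<bullet> (inverse (norm w) *\<^sub>R w)) * x w) = lam * x u)}"

definition sigma_min :: "'a::euclidean_space set \<Rightarrow> real" where
  "sigma_min V = Min (sq_sing_vals V)"

definition sigma_max :: "'a::euclidean_space set \<Rightarrow> real" where
  "sigma_max V = Max (sq_sing_vals V)"

definition kappa :: "'a::euclidean_space set \<Rightarrow> real" where
  "kappa V = sigma_max V / sigma_min V"

end

theory Submission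
  imports Defs
begin

text \<open>Let \<open>\<sigma>\<close> and \<open>M\<close> be the extreme eigenvalues of the Gram matrix \<open>(sgn u \<bullet> sgn w)\<close> of
  OPT, so that \<open>\<sigma> |c|\<^sup>2 \<le> |\<Sum>u. c u *\<^sub>R sgn u|\<^sup>2 \<le> M |c|\<^sup>2\<close> (Rayleigh). For a column \<open>a\<close> of \<open>A\<close>,
  expanding the projection of \<open>a\<close> onto \<open>span OPT\<close> in the vectors \<open>sgn u\<close>, the lower bound and
  Cauchy-Schwarz give \<open>\<sigma> |\<Pi>\<^sub>O\<^sub>P\<^sub>T a|\<^sup>2 \<le> \<Sum>u\<in>OPT. (a \<bullet> sgn u)\<^sup>2\<close>; dually, the upper
  bound tested on the coefficients \<open>(a \<bullet> sgn u)\<close> for \<open>u \<in> W \<subseteq> OPT\<close> gives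
  \<open>\<Sum>u\<in>W. (a \<bullet> sgn u)\<^sup>2 \<le> M |\<Pi>\<^sub>W a|\<^sup>2\<close>. Splitting the sum along the partition and summing over
  the columns yields \<open>\<sigma> f(OPT) \<le> M (f(I) + f(J))\<close>, better than the claim by a factor 2.
  The Rayleigh bounds come from maximising the quadratic form on the compact unit sphere, followed
  by a first-variation argument.\<close>

lemma proj_span_unique:
  fixes V :: "'a::euclidean_space set"
  shows "\<exists>!p. p \<in> span V \<and> (\<forall>w\<in>span V. (x - p) \<bullet> w = 0)"
proof -
  obtain y z where yz: "y \<in> span V" "\<And>w. w \<in> span V \<Longrightarrow> orthogonal z w" "x = y + z"
    by (rule orthogonal_subspace_decomp_exists[of V x]) blast
  show ?thesis
  proof (rule ex1I[of _ y])
    show "y \<in> span V \<and> (\<forall>w\<in>span V. (x - y) \<bullet> w = 0)"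
      using yz by (simp add: orthogonal_def)
    fix p assume p: "p \<in> span V \<and> (\<forall>w\<in>span V. (x - p) \<bullet> w = 0)"
    have "p - y \<in> span V" using p yz(1) by (simp add: span_diff)
    then have "(x - y) \<bullet> (p - y) = 0" "(x - p) \<bullet> (p - y) = 0"
      using yz p by (simp_all add: orthogonal_def)
    then have "(p - y) \<bullet> (p - y) = 0"
      by (metis diff_self inner_diff_left inner_zero_left diff_diff_eq2 diff_add_cancel)
    then show "p = y" by simp
  qed
qed

lemma proj_span_in_span: "proj_span V x \<in> span V"
  and proj_span_orthogonal: "w \<in> span V \<Longrightarrow> (x - proj_span V x) \<bullet> w = 0"
  using theI'[OF proj_span_unique[of V x]] unfolding proj_span_def by auto

lemma proj_span_eqI:
  assumes "p \<in> span V" "\<And>w. w \<in> span V \<Longrightarrow> (x - p) \<bullet> w = 0"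
  shows "proj_span V x = p"
  using proj_span_unique[of V x] proj_span_in_span proj_span_orthogonal assms by blast

lemma inner_proj_span: "w \<in> span V \<Longrightarrow> proj_span V x \<bullet> w = x \<bullet> w"
  using proj_span_orthogonal[of w V x] by (simp add: inner_diff_left)

lemma linear_proj_span: "linear (proj_span V)"
proof (rule linearI)
  fix x y
  show "proj_span V (x + y) = proj_span V x + proj_span V y"
    by (rule proj_span_eqI)
      (simp_all add: span_add proj_span_in_span inner_add_left inner_diff_left inner_proj_span)
next
  fix c :: real and x
  show "proj_span V (c *\<^sub>R x) = c *\<^sub>R proj_span V x"
    by (rule proj_span_eqI)
      (simp_all add: span_scale proj_span_in_span inner_diff_left inner_proj_span)
qed

lemma proj_span_empty: "proj_span {} x = 0"
  by (rule proj_span_eqI) auto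

lemma column_matrix_matrix_mult: "column j (M ** A) = M *v column j A"
  by (simp add: matrix_matrix_mult_def matrix_vector_mult_def column_def vec_eq_iff)

lemma frob2_eq_sum_norm_columns: "frob2 (M::real^'n^'m) = (\<Sum>j\<in>UNIV. (norm (column j M))^2)"
  unfolding frob2_def power2_norm_eq_inner inner_vec_def column_def
  by (subst sum.swap) (simp add: power2_eq_square)

lemma fM_eq_sum_norm_proj_columns: "fM A V = (\<Sum>j\<in>UNIV. (norm (proj_span V (column j A)))^2)"
  unfolding fM_def frob2_eq_sum_norm_columns column_matrix_matrix_mult proj_mat_def
  by (simp add: matrix_vector_mul(2)[OF linear_proj_span])

lemma fM_nonneg: "fM A V \<ge> 0"
  unfolding fM_eq_sum_norm_proj_columns by (simp add: sum_nonneg)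

lemma fM_empty: "fM A {} = 0"
  unfolding fM_eq_sum_norm_proj_columns by (simp add: proj_span_empty)

definition quad_form :: "('a \<Rightarrow> 'a \<Rightarrow> real) \<Rightarrow> 'a set \<Rightarrow> ('a \<Rightarrow> real) \<Rightarrow> real" where
  "quad_form G V c = (\<Sum>u\<in>V. \<Sum>w\<in>V. c u * c w * G u w)"

definition sqnorm_on :: "'a set \<Rightarrow> ('a \<Rightarrow> real) \<Rightarrow> real" where
  "sqnorm_on V c = (\<Sum>u\<in>V. (c u)^2)"

definition eigenvalues_on :: "('a \<Rightarrow> 'a \<Rightarrow> real) \<Rightarrow> 'a set \<Rightarrow> real set" where
  "eigenvalues_on G V =
     {lam. \<exists>x. (\<exists>u\<in>V. x u \<noteq> 0) \<and> (\<forall>u\<in>V. (\<Sum>w\<in>V. G u w * x w) = lam * x u)}"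

lemma sqnorm_on_nonneg: "sqnorm_on V c \<ge> 0"
  unfolding sqnorm_on_def by (simp add: sum_nonneg)

lemma quad_form_add_scaled:
  assumes sym: "\<And>u w. u \<in> V \<Longrightarrow> w \<in> V \<Longrightarrow> G u w = G w u"
  shows "quad_form G V (\<lambda>u. c u + t * d u) =
    quad_form G V c + 2 * t * (\<Sum>u\<in>V. d u * (\<Sum>w\<in>V. G u w * c w)) + t^2 * quad_form G V d"
proof -
  have swap: "(\<Sum>u\<in>V. \<Sum>w\<in>V. c u * d w * G u w) = (\<Sum>u\<in>V. \<Sum>w\<in>V. d u * c w * G u w)"
    by (subst sum.swap) (auto simp: sym mult_ac intro!: sum.cong)
  have "quad_form G V (\<lambda>u. c u + t * d u) = quad_form G V c
      + t * (\<Sum>u\<in>V. \<Sum>w\<in>V. c u * d w * G u w) + t * (\<Sum>u\<in>V. \<Sum>w\<in>V. d u * c w * G u w)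
      + t^2 * quad_form G V d"
    unfolding quad_form_def
    by (simp add: algebra_simps power2_eq_square sum.distrib sum_distrib_left)
  then show ?thesis
    unfolding swap by (simp add: sum_distrib_left mult_ac)
qed

lemma sqnorm_on_add_scaled:
  "sqnorm_on V (\<lambda>u. c u + t * d u) = sqnorm_on V c + 2 * t * (\<Sum>u\<in>V. d u * c u) + t^2 * sqnorm_on V d"
  unfolding sqnorm_on_def
  by (simp add: power2_eq_square algebra_simps sum.distrib sum_distrib_left)

lemma linear_coeff_eq_0_if_nonneg:
  fixes a b :: real
  assumes "\<And>t. 0 \<le> a * t + b * t^2"
  shows "a = 0"
proof (rule ccontr)
  assume "a \<noteq> 0"
  define t where "t = - a / (\<bar>b\<bar> + 1)"
  have "b * t^2 \<le> \<bar>b\<bar> * t^2"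
    by (simp add: mult_right_mono)
  also have "\<dots> < (\<bar>b\<bar> + 1) * t^2"
    using \<open>a \<noteq> 0\<close> by (intro mult_strict_right_mono) (auto simp: t_def)
  also have "\<dots> = - a * t"
    by (simp add: t_def power2_eq_square)
  finally show False using assms[of t] by simp
qed

text \<open>Perturbing \<open>c\<close> along the residual \<open>G c - mu c\<close>, the first-order term is \<open>-2 |residual|\<^sup>2\<close>,
  which must vanish.\<close>
lemma eigenvector_if_rayleigh_max:
  assumes sym: "\<And>u w. u \<in> V \<Longrightarrow> w \<in> V \<Longrightarrow> G u w = G w u"
    and le: "\<And>d. quad_form G V d \<le> mu * sqnorm_on V d"
    and eq: "quad_form G V c = mu * sqnorm_on V c"
    and "finite V" "u \<in> V"
  shows "(\<Sum>w\<in>V. G u w * c w) = mu * c u"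
proof -
  define r where "r u = (\<Sum>w\<in>V. G u w * c w) - mu * c u" for u
  have "(\<Sum>u\<in>V. r u * (\<Sum>w\<in>V. G u w * c w)) - mu * (\<Sum>u\<in>V. r u * c u)
      = (\<Sum>u\<in>V. r u * ((\<Sum>w\<in>V. G u w * c w) - mu * c u))"
    by (simp add: sum_distrib_left right_diff_distrib sum_subtractf mult_ac)
  also have "\<dots> = sqnorm_on V r"
    by (simp add: sqnorm_on_def r_def power2_eq_square)
  finally have residual:
    "(\<Sum>u\<in>V. r u * (\<Sum>w\<in>V. G u w * c w)) - mu * (\<Sum>u\<in>V. r u * c u) = sqnorm_on V r" .
  have "0 \<le> (- 2 * sqnorm_on V r) * t + (mu * sqnorm_on V r - quad_form G V r) * t^2" for t
  proof -
    have "quad_form G V (\<lambda>u. c u + t * r u) \<le> mu * sqnorm_on V (\<lambda>u. c u + t * r u)"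
      by (rule le)
    then show ?thesis
      using quad_form_add_scaled[where c=c and t=t and d=r, OF sym]
        sqnorm_on_add_scaled[of V c t r] eq residual
      by (simp add: algebra_simps)
  qed
  then have "sqnorm_on V r = 0"
    using linear_coeff_eq_0_if_nonneg by fastforce
  then have "r u = 0"
    using sum_nonneg_eq_0_iff[OF \<open>finite V\<close>, of "\<lambda>u. (r u)^2"] \<open>u \<in> V\<close>
    by (simp add: sqnorm_on_def)
  then show ?thesis unfolding r_def by simp
qed

lemma quad_form_scale: "quad_form G V (\<lambda>u. s * d u) = s^2 * quad_form G V d"
  unfolding quad_form_def by (simp add: sum_distrib_left power2_eq_square mult_ac)

lemma sqnorm_on_scale: "sqnorm_on V (\<lambda>u. s * d u) = s^2 * sqnorm_on V d"
  unfolding sqnorm_on_def by (simp add: sum_distrib_left power_mult_distrib)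

lemma quad_form_le_if_le_on_unit_sphere:
  assumes "finite V" and unit: "\<And>e. sqnorm_on V e = 1 \<Longrightarrow> quad_form G V e \<le> lam"
  shows "quad_form G V d \<le> lam * sqnorm_on V d"
proof (cases "sqnorm_on V d = 0")
  case True
  then have "\<forall>u\<in>V. d u = 0"
    using sum_nonneg_eq_0_iff[OF \<open>finite V\<close>, of "\<lambda>u. (d u)^2"] by (simp add: sqnorm_on_def)
  then show ?thesis using True by (simp add: quad_form_def)
next
  case False
  define s where "s = sqrt (sqnorm_on V d)"
  have s2: "s^2 = sqnorm_on V d" and "s > 0"
    using False sqnorm_on_nonneg[of V d] by (simp_all add: s_def)
  define e where "e u = d u / s" for u
  have d: "d = (\<lambda>u. s * e u)" using \<open>s > 0\<close> by (simp add: e_def)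
  have "sqnorm_on V e = 1"
    using s2 False by (simp add: d sqnorm_on_scale)
  then have "quad_form G V e \<le> lam" by (rule unit)
  then show ?thesis
    using s2 False by (simp add: d quad_form_scale sqnorm_on_scale mult_left_mono mult.commute)
qed

definition coord_vec :: "('a \<Rightarrow> 'p::finite) \<Rightarrow> 'a set \<Rightarrow> ('a \<Rightarrow> real) \<Rightarrow> real^'p" where
  "coord_vec g V x = (\<chi> j. if j \<in> g ` V then x (inv_into V g j) else 0)"

lemma coord_vec_nth: "inj_on g V \<Longrightarrow> u \<in> V \<Longrightarrow> coord_vec g V x $ g u = x u"
  by (simp add: coord_vec_def)

lemma inner_coord_vec:
  assumes "inj_on g V"
  shows "coord_vec g V x \<bullet> coord_vec g V y = (\<Sum>u\<in>V. x u * y u)"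
proof -
  have "coord_vec g V x \<bullet> coord_vec g V y = (\<Sum>j\<in>UNIV. coord_vec g V x $ j * coord_vec g V y $ j)"
    by (simp add: inner_vec_def)
  also have "\<dots> = (\<Sum>j\<in>g ` V. coord_vec g V x $ j * coord_vec g V y $ j)"
    by (rule sum.mono_neutral_right) (auto simp: coord_vec_def)
  also have "\<dots> = (\<Sum>u\<in>V. x u * y u)"
    by (simp add: sum.reindex[OF assms] coord_vec_nth[OF assms])
  finally show ?thesis .
qed

lemma rayleigh_max_exists:
  fixes g :: "'a \<Rightarrow> 'p::finite"
  assumes inj: "inj_on g V" and "V \<noteq> {}"
  shows "\<exists>c. sqnorm_on V c = 1 \<and> (\<forall>d. sqnorm_on V d = 1 \<longrightarrow> quad_form G V d \<le> quad_form G V c)"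
proof -
  define K where "K = sphere (0::real^'p) 1 \<inter> (\<Inter>j\<in>- g ` V. {y. y $ j = 0})"
  have norm_coord_vec: "norm (coord_vec g V d) = sqrt (sqnorm_on V d)" for d
    by (simp add: norm_eq_sqrt_inner inner_coord_vec[OF inj] sqnorm_on_def power2_eq_square)
  have K_coord_vec: "coord_vec g V d \<in> K" if "sqnorm_on V d = 1" for d
  proof -
    have "coord_vec g V d $ j = 0" if "j \<notin> g ` V" for j
      using that by (simp add: coord_vec_def)
    then show ?thesis
      using \<open>sqnorm_on V d = 1\<close> norm_coord_vec[of d] by (auto simp: K_def)
  qed
  have compact: "compact K"
    unfolding K_def
    by (intro compact_Int_closed closed_INT ballI closed_Collect_eq continuous_intros) auto
  obtain u0 where "u0 \<in> V" using \<open>V \<noteq> {}\<close> by auto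
  then have "axis (g u0) 1 \<in> K"
    unfolding K_def using norm_axis_1[of "g u0"] by (auto simp: axis_def)
  then have nonempty: "K \<noteq> {}" by blast
  have "continuous_on K (\<lambda>y. quad_form G V (\<lambda>u. y $ g u))"
    unfolding quad_form_def by (intro continuous_intros)
  then obtain y0 where "y0 \<in> K" and y0_max:
      "\<And>y. y \<in> K \<Longrightarrow> quad_form G V (\<lambda>u. y $ g u) \<le> quad_form G V (\<lambda>u. y0 $ g u)"
    using continuous_attains_sup[OF compact nonempty] by blast
  define c where "c u = y0 $ g u" for u
  have "y0 $ j = 0" if "j \<notin> g ` V" for j
    using \<open>y0 \<in> K\<close> that by (simp add: K_def)
  then have "y0 = coord_vec g V c"
    unfolding vec_eq_iff coord_vec_def c_def by (auto simp: f_inv_into_f)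
  then have "sqnorm_on V c = 1"
    using \<open>y0 \<in> K\<close> norm_coord_vec[of c] by (simp add: K_def)
  moreover have "quad_form G V d \<le> quad_form G V c" if "sqnorm_on V d = 1" for d
    using y0_max[OF K_coord_vec[OF that]] by (simp add: c_def coord_vec_nth[OF inj] quad_form_def)
  ultimately show ?thesis by blast
qed

lemma eigenvectors_orthogonal:
  fixes G :: "'a \<Rightarrow> 'a \<Rightarrow> real"
  assumes sym: "\<And>u w. u \<in> V \<Longrightarrow> w \<in> V \<Longrightarrow> G u w = G w u"
    and x: "\<forall>u\<in>V. (\<Sum>w\<in>V. G u w * x w) = lam * x u"
    and y: "\<forall>u\<in>V. (\<Sum>w\<in>V. G u w * y w) = mu * y u"
    and "lam \<noteq> mu"
  shows "(\<Sum>u\<in>V. x u * y u) = 0"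
proof -
  have "lam * (\<Sum>u\<in>V. x u * y u) = (\<Sum>u\<in>V. (lam * x u) * y u)"
    by (simp add: sum_distrib_left mult_ac)
  also have "\<dots> = (\<Sum>u\<in>V. (\<Sum>w\<in>V. G u w * x w) * y u)"
    using x by simp
  also have "\<dots> = (\<Sum>u\<in>V. \<Sum>w\<in>V. G u w * x w * y u)"
    by (simp add: sum_distrib_right)
  also have "\<dots> = (\<Sum>w\<in>V. x w * (\<Sum>u\<in>V. G w u * y u))"
    by (subst sum.swap) (auto simp: sum_distrib_left sym mult_ac intro!: sum.cong)
  also have "\<dots> = mu * (\<Sum>u\<in>V. x u * y u)"
    using y by (simp add: sum_distrib_left mult_ac)
  finally show ?thesis using \<open>lam \<noteq> mu\<close> by simp
qed

text \<open>Eigenvectors for distinct eigenvalues are orthogonal in \<open>real^'p\<close>, so there are at most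
  \<open>CARD('p)\<close> eigenvalues.\<close>
lemma finite_eigenvalues_on:
  fixes g :: "'a \<Rightarrow> 'p::finite"
  assumes inj: "inj_on g V"
    and sym: "\<And>u w. u \<in> V \<Longrightarrow> w \<in> V \<Longrightarrow> G u w = G w u"
  shows "finite (eigenvalues_on G V)"
proof (rule ccontr)
  assume "infinite (eigenvalues_on G V)"
  then obtain T where T: "T \<subseteq> eigenvalues_on G V" "finite T" "card T = DIM(real^'p) + 1"
    using infinite_arbitrarily_large by blast
  define x where "x lam = (SOME x. (\<exists>u\<in>V. x u \<noteq> 0) \<and>
      (\<forall>u\<in>V. (\<Sum>w\<in>V. G u w * x w) = lam * x u))" for lam
  have x: "(\<exists>u\<in>V. x lam u \<noteq> 0) \<and> (\<forall>u\<in>V. (\<Sum>w\<in>V. G u w * x lam w) = lam * x lam u)"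
    if "lam \<in> eigenvalues_on G V" for lam
    unfolding x_def using that unfolding eigenvalues_on_def mem_Collect_eq by (rule someI_ex)
  define E where "E lam = coord_vec g V (x lam)" for lam
  have E_nonzero: "E lam \<noteq> 0" if lam: "lam \<in> T" for lam
  proof -
    obtain u where "u \<in> V" "x lam u \<noteq> 0" using x[of lam] lam T(1) by blast
    then have "E lam $ g u \<noteq> 0" by (simp add: E_def coord_vec_nth[OF inj])
    then show ?thesis by auto
  qed
  have E_orth: "E l1 \<bullet> E l2 = 0" if "l1 \<in> T" "l2 \<in> T" "l1 \<noteq> l2" for l1 l2
    unfolding E_def inner_coord_vec[OF inj]
    by (rule eigenvectors_orthogonal[OF sym]) (use x that T(1) in blast)+
  have "inj_on E T"
  proof (rule inj_onI, rule ccontr)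
    fix l1 l2 assume "l1 \<in> T" "l2 \<in> T" "E l1 = E l2" "l1 \<noteq> l2"
    then have "E l1 \<bullet> E l1 = 0" using E_orth by metis
    then show False using E_nonzero \<open>l1 \<in> T\<close> by simp
  qed
  have "independent (E ` T)"
  proof (rule pairwise_orthogonal_independent)
    show "0 \<notin> E ` T" using E_nonzero by fastforce
    show "pairwise orthogonal (E ` T)"
      by (auto simp: pairwise_def orthogonal_def intro: E_orth)
  qed
  then have "card (E ` T) \<le> DIM(real^'p)"
    using independent_bound by blast
  then show False using card_image[OF \<open>inj_on E T\<close>] T(3) by simp
qed

lemma rayleigh_max_eigenvalue:
  fixes g :: "'a \<Rightarrow> 'p::finite"
  assumes inj: "inj_on g V"
    and sym: "\<And>u w. u \<in> V \<Longrightarrow> w \<in> V \<Longrightarrow> G u w = G w u"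
    and "V \<noteq> {}"
  shows "\<exists>lam\<in>eigenvalues_on G V. \<forall>d. quad_form G V d \<le> lam * sqnorm_on V d"
proof -
  have "finite V" using finite_image_iff[OF inj] by simp
  obtain c where c: "sqnorm_on V c = 1"
    and c_max: "\<And>d. sqnorm_on V d = 1 \<Longrightarrow> quad_form G V d \<le> quad_form G V c"
    using rayleigh_max_exists[OF inj \<open>V \<noteq> {}\<close>] by blast
  have le: "quad_form G V d \<le> quad_form G V c * sqnorm_on V d" for d
    using quad_form_le_if_le_on_unit_sphere[OF \<open>finite V\<close> c_max] .
  have "(\<Sum>w\<in>V. G u w * c w) = quad_form G V c * c u" if "u \<in> V" for u
    by (rule eigenvector_if_rayleigh_max[of V G]) (use sym le c \<open>finite V\<close> that in auto)
  moreover have "\<exists>u\<in>V. c u \<noteq> 0"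
  proof (rule ccontr)
    assume "\<not> (\<exists>u\<in>V. c u \<noteq> 0)"
    then have "sqnorm_on V c = 0" by (simp add: sqnorm_on_def)
    with c show False by simp
  qed
  ultimately have "quad_form G V c \<in> eigenvalues_on G V"
    unfolding eigenvalues_on_def by blast
  with le show ?thesis by blast
qed

lemma eigenvalues_on_uminus:
  "eigenvalues_on (\<lambda>u w. - G u w) V = uminus ` eigenvalues_on G V"
proof -
  have "lam \<in> eigenvalues_on (\<lambda>u w. - G u w) V \<longleftrightarrow> - lam \<in> eigenvalues_on G V" for lam
    unfolding eigenvalues_on_def
    by (simp add: sum_negf eq_neg_iff_add_eq_0 neg_eq_iff_add_eq_0 add.commute)
  then show ?thesis by (force simp: image_iff)
qed

lemma rayleigh_bounds:
  fixes g :: "'a \<Rightarrow> 'p::finite"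
  assumes inj: "inj_on g V"
    and sym: "\<And>u w. u \<in> V \<Longrightarrow> w \<in> V \<Longrightarrow> G u w = G w u"
    and "V \<noteq> {}"
  shows "Min (eigenvalues_on G V) * sqnorm_on V d \<le> quad_form G V d"
    and "quad_form G V d \<le> Max (eigenvalues_on G V) * sqnorm_on V d"
    and "Min (eigenvalues_on G V) \<le> Max (eigenvalues_on G V)"
proof -
  have fin: "finite (eigenvalues_on G V)"
    using finite_eigenvalues_on[OF inj sym] .
  obtain lam where lam: "lam \<in> eigenvalues_on G V"
    and lam_bound: "\<forall>d. quad_form G V d \<le> lam * sqnorm_on V d"
    using rayleigh_max_eigenvalue[where G=G, OF inj sym \<open>V \<noteq> {}\<close>] by blast
  show "Min (eigenvalues_on G V) \<le> Max (eigenvalues_on G V)"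
    using fin lam by (meson Max_ge Min_le order_trans)
  show "quad_form G V d \<le> Max (eigenvalues_on G V) * sqnorm_on V d"
    using lam lam_bound Max_ge[OF fin] sqnorm_on_nonneg by (meson mult_right_mono order_trans)
  have sym': "\<And>u w. u \<in> V \<Longrightarrow> w \<in> V \<Longrightarrow> - G u w = - G w u"
    using sym by simp
  obtain lam' where "lam' \<in> eigenvalues_on (\<lambda>u w. - G u w) V"
    and "\<forall>d. quad_form (\<lambda>u w. - G u w) V d \<le> lam' * sqnorm_on V d"
    using rayleigh_max_eigenvalue[where G="\<lambda>u w. - G u w", OF inj sym' \<open>V \<noteq> {}\<close>] by blast
  then have "- lam' \<in> eigenvalues_on G V" and "- lam' * sqnorm_on V d \<le> quad_form G V d"
    by (auto simp: eigenvalues_on_uminus quad_form_def sum_negf)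
  then show "Min (eigenvalues_on G V) * sqnorm_on V d \<le> quad_form G V d"
    using Min_le[OF fin] sqnorm_on_nonneg by (meson mult_right_mono order_trans)
qed

definition unit_gram :: "'a::real_inner \<Rightarrow> 'a \<Rightarrow> real" where
  "unit_gram u w = sgn u \<bullet> sgn w"

lemma unit_gram_sym: "unit_gram u w = unit_gram w u"
  by (simp add: unit_gram_def inner_commute)

lemma sq_sing_vals_eq_eigenvalues_on:
  "sq_sing_vals V = eigenvalues_on unit_gram V"
  by (simp add: sq_sing_vals_def eigenvalues_on_def unit_gram_def sgn_div_norm)

lemma quad_form_unit_gram:
  "quad_form unit_gram V c = (norm (\<Sum>v\<in>V. c v *\<^sub>R sgn v))^2"
  unfolding quad_form_def unit_gram_def power2_norm_eq_inner inner_sum_left inner_sum_right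
  by (simp add: sum_distrib_left mult_ac inner_commute)

lemma sgn_in_span:
  fixes v :: "'a::real_normed_vector"
  assumes "v \<in> V"
  shows "sgn v \<in> span V"
  unfolding sgn_div_norm by (rule span_scale, rule span_base, fact)

lemma norm_proj_span_le_sum_inner_sgn:
  fixes V :: "'a::euclidean_space set"
  assumes "finite V" and "0 \<notin> V"
    and lower: "\<And>c. \<sigma> * sqnorm_on V c \<le> quad_form unit_gram V c"
  shows "\<sigma> * (norm (proj_span V a))^2 \<le> (\<Sum>u\<in>V. (a \<bullet> sgn u)^2)"
proof -
  define b where "b = proj_span V a"
  have "b \<in> span V" unfolding b_def by (rule proj_span_in_span)
  then obtain k where k: "b = (\<Sum>v\<in>V. k v *\<^sub>R v)"
    using span_finite[OF \<open>finite V\<close>] by auto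
  define c where "c v = k v * norm v" for v
  have b: "b = (\<Sum>v\<in>V. c v *\<^sub>R sgn v)"
    unfolding k c_def using \<open>0 \<notin> V\<close> by (intro sum.cong) (auto simp: sgn_div_norm)
  define T where "T = (\<Sum>u\<in>V. (b \<bullet> sgn u)^2)"
  have T: "T = (\<Sum>u\<in>V. (a \<bullet> sgn u)^2)"
    unfolding T_def b_def by (intro sum.cong) (simp_all add: inner_proj_span sgn_in_span)
  define X where "X = (norm b)^2"
  have "X = (\<Sum>v\<in>V. c v * (b \<bullet> sgn v))"
    unfolding X_def power2_norm_eq_inner by (subst (2) b) (simp add: inner_sum_right)
  then have Cauchy_Schwarz: "X^2 \<le> sqnorm_on V c * T"
    using Cauchy_Schwarz_ineq_sum[of c "\<lambda>v. b \<bullet> sgn v" V] by (simp add: sqnorm_on_def T_def)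
  have "\<sigma> * sqnorm_on V c \<le> X"
    using lower[of c] by (simp add: quad_form_unit_gram X_def b)
  have "T \<ge> 0" "X \<ge> 0"
    unfolding T_def X_def by (simp_all add: sum_nonneg)
  have "\<sigma> * X \<le> T"
  proof (cases "\<sigma> > 0 \<and> X > 0")
    case True
    then have "\<sigma> * X^2 \<le> (\<sigma> * sqnorm_on V c) * T"
      using Cauchy_Schwarz by (simp add: mult_left_mono mult.assoc)
    also have "\<dots> \<le> X * T"
      using \<open>\<sigma> * sqnorm_on V c \<le> X\<close> \<open>T \<ge> 0\<close> by (rule mult_right_mono)
    finally have "X * (\<sigma> * X) \<le> X * T"
      by (simp add: power2_eq_square mult_ac)
    then show ?thesis using True by simp
  next
    case False
    then have "\<sigma> * X \<le> 0"
      using \<open>X \<ge> 0\<close> by (auto intro: mult_nonpos_nonneg)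
    then show ?thesis using \<open>T \<ge> 0\<close> by simp
  qed
  then show ?thesis by (simp add: X_def b_def T)
qed

lemma sum_inner_sgn_le_norm_proj_span:
  fixes V :: "'a::euclidean_space set"
  assumes "finite V" and "W \<subseteq> V" and "0 \<le> M"
    and upper: "\<And>c. quad_form unit_gram V c \<le> M * sqnorm_on V c"
  shows "(\<Sum>u\<in>W. (a \<bullet> sgn u)^2) \<le> M * (norm (proj_span W a))^2"
proof -
  define b where "b = proj_span W a"
  define s where "s = (\<Sum>u\<in>W. (b \<bullet> sgn u)^2)"
  have s: "s = (\<Sum>u\<in>W. (a \<bullet> sgn u)^2)"
    unfolding s_def b_def by (intro sum.cong) (simp_all add: inner_proj_span sgn_in_span)
  text \<open>Test the upper Rayleigh bound on the coefficients of \<open>b\<close> against the unit vectors of \<open>W\<close>,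
    extended by zero to \<open>V\<close>.\<close>
  define y where "y u = (if u \<in> W then b \<bullet> sgn u else 0)" for u
  have "sqnorm_on V y = s"
    unfolding sqnorm_on_def s_def y_def
    by (simp add: if_distrib[of "\<lambda>x. x^2"] sum.If_cases[OF \<open>finite V\<close>] Int_absorb1[OF \<open>W \<subseteq> V\<close>])
  define L where "L = (\<Sum>v\<in>V. y v *\<^sub>R sgn v)"
  have "b \<bullet> L = (\<Sum>v\<in>V. if v \<in> W then (b \<bullet> sgn v)^2 else 0)"
    unfolding L_def inner_sum_right by (intro sum.cong) (simp_all add: y_def power2_eq_square)
  also have "\<dots> = s"
    unfolding s_def using sum.inter_restrict[OF \<open>finite V\<close>, of "\<lambda>v. (b \<bullet> sgn v)^2" W]
    by (simp add: Int_absorb1[OF \<open>W \<subseteq> V\<close>])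
  finally have "s \<le> norm b * norm L"
    using Cauchy_Schwarz_ineq2[of b L] by simp
  moreover have "s \<ge> 0" unfolding s_def by (simp add: sum_nonneg)
  ultimately have "s^2 \<le> (norm b)^2 * (norm L)^2"
    using power_mono[of s "norm b * norm L" 2] by (simp add: power_mult_distrib)
  also have "\<dots> \<le> (norm b)^2 * (M * s)"
    using upper[of y] \<open>sqnorm_on V y = s\<close> by (simp add: quad_form_unit_gram L_def mult_left_mono)
  finally have "s * s \<le> s * (M * (norm b)^2)"
    by (simp add: power2_eq_square mult_ac)
  then have "s \<le> M * (norm b)^2"
    using \<open>s \<ge> 0\<close> \<open>0 \<le> M\<close> by (cases "s = 0") simp_all
  then show ?thesis unfolding s b_def .
qed

lemma fM_partition_bound:
  fixes A :: "real^'n^'m" and V I J :: "(real^'m) set"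
  assumes "finite V" and "0 \<notin> V" and "I \<union> J = V" and "I \<inter> J = {}" and "0 \<le> M"
    and lower: "\<And>c. \<sigma> * sqnorm_on V c \<le> quad_form unit_gram V c"
    and upper: "\<And>c. quad_form unit_gram V c \<le> M * sqnorm_on V c"
  shows "\<sigma> * fM A V \<le> M * (fM A I + fM A J)"
proof -
  have "finite I" "finite J" "I \<subseteq> V" "J \<subseteq> V"
    using \<open>finite V\<close> \<open>I \<union> J = V\<close> by (auto intro: finite_subset)
  have "\<sigma> * (norm (proj_span V a))^2 \<le> M * (norm (proj_span I a))^2 + M * (norm (proj_span J a))^2"
    for a
  proof -
    have "\<sigma> * (norm (proj_span V a))^2 \<le> (\<Sum>u\<in>V. (a \<bullet> sgn u)^2)"
      using norm_proj_span_le_sum_inner_sgn[OF \<open>finite V\<close> \<open>0 \<notin> V\<close> lower] .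
    also have "\<dots> = (\<Sum>u\<in>I. (a \<bullet> sgn u)^2) + (\<Sum>u\<in>J. (a \<bullet> sgn u)^2)"
      unfolding \<open>I \<union> J = V\<close>[symmetric]
      using sum.union_disjoint[OF \<open>finite I\<close> \<open>finite J\<close> \<open>I \<inter> J = {}\<close>] .
    also have "\<dots> \<le> M * (norm (proj_span I a))^2 + M * (norm (proj_span J a))^2"
      using sum_inner_sgn_le_norm_proj_span[OF \<open>finite V\<close> _ \<open>0 \<le> M\<close> upper]
        \<open>I \<subseteq> V\<close> \<open>J \<subseteq> V\<close> by (intro add_mono) blast+
    finally show ?thesis .
  qed
  then show ?thesis
    unfolding fM_eq_sum_norm_proj_columns sum_distrib_left distrib_left sum.distrib[symmetric]
    by (intro sum_mono)
qed

theorem lemma4: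
  fixes A :: "real^'n^'m" and B :: "real^'p^'m" and OPT I J :: "(real^'m) set" and k :: nat
  assumes nonzero: "\<forall>j. column j B \<noteq> 0"
    and OPT_sub: "OPT \<subseteq> cols B" and OPT_card: "card OPT = k"
    and OPT_max: "\<forall>S. S \<subseteq> cols B \<and> card S = k \<longrightarrow> fM A S \<le> fM A OPT"
    and sig_pos: "sigma_min OPT > 0"
    and part: "I \<union> J = OPT" "I \<inter> J = {}"
  shows "fM A I + fM A J \<ge> fM A OPT / (2 * kappa OPT)"
proof (cases "OPT = {}")
  case True
  then show ?thesis by (simp add: fM_empty fM_nonneg)
next
  case False
  have "OPT \<subseteq> range (\<lambda>j. column j B)"
    using OPT_sub by (auto simp: cols_def)
  then have inj: "inj_on (inv_into UNIV (\<lambda>j. column j B)) OPT"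
    by (rule inj_on_inv_into)
  then have "finite OPT"
    using finite_image_iff[OF inj] by simp
  have "0 \<notin> OPT"
    using OPT_sub nonzero by (auto simp: cols_def)
  note rayleigh = rayleigh_bounds[where G=unit_gram, OF inj unit_gram_sym False,
      folded sq_sing_vals_eq_eigenvalues_on sigma_min_def sigma_max_def]
  have "sigma_max OPT > 0"
    using sig_pos rayleigh(3) by linarith
  have bound: "sigma_min OPT * fM A OPT \<le> sigma_max OPT * (fM A I + fM A J)"
    using fM_partition_bound[OF \<open>finite OPT\<close> \<open>0 \<notin> OPT\<close> part less_imp_le rayleigh(1,2)]
      \<open>sigma_max OPT > 0\<close> .
  have "fM A OPT / (2 * kappa OPT) = sigma_min OPT * fM A OPT / (2 * sigma_max OPT)"
    using sig_pos \<open>sigma_max OPT > 0\<close> by (simp add: kappa_def)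
  also have "\<dots> \<le> sigma_max OPT * (fM A I + fM A J) / (2 * sigma_max OPT)"
    using bound \<open>sigma_max OPT > 0\<close> by (intro divide_right_mono) auto
  also have "\<dots> \<le> fM A I + fM A J"
    using \<open>sigma_max OPT > 0\<close> fM_nonneg[of A I] fM_nonneg[of A J] by simp
  finally show ?thesis .
qed

end
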